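(* Assume the standing setup below. For every integer $i$ with $0\le i\le s-2r+1$ and every $I\in\mathbb{P}_i(X)$, the linear form \[ \sum_{H\in \mathbb{P}_{i+2r}(X),\ I\subseteq H} L_H \] lies in the $\mathbb{F}_p$-linear span of $\{L_H : H\subseteq X,\ i\le |H|\le i+2r-1\}$.
   Context: Standing setup: $p$ is a prime; $K=\{k_1,\ldots,k_r\}$ and $L=\{l_1,\ldots,l_s\}$ are disjoint subsets of $\{0,1,\ldots,p-1\}$; $\mathcal{A}=\{A_1,\ldots,A_m\}$ is a family of distinct subsets of $[n]$ with $|A_i|\pmod p\in K$ for all $i$ and $|A_i\cap A_j|\pmod p\in L$ for all $i\ne j$. Let $X=[n-1]$. Associate a variable $x_i$ to each $A_i$, and for each $I\subseteq X$ define the linear form over $\mathbb{F}_p$: $L_I=\sum_{i:\ I\subseteq A_i} x_i$. For $j\ge0$, $\mathbb{P}_j(X)$ is the set of $j$-element subsets of $X$. *)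

theory Defs
  imports "HOL-Number_Theory.Cong"
begin

text \<open>Linear forms over F_p in the variables x_0, ..., x_(m-1) (one variable per set A_i,
  the family being indexed by {0..<m}) are represented by their coefficient vectors
  nat => int, coefficients read modulo p.  The form L_I has coefficient 1 at x_i
  exactly when I is a subset of A_i.\<close>

definition lin_form :: "(nat \<Rightarrow> nat set) \<Rightarrow> nat \<Rightarrow> nat set \<Rightarrow> nat \<Rightarrow> int" where
  "lin_form A m I = (\<lambda>i. if i < m \<and> I \<subseteq> A i then 1 else 0)"

definition in_span_mod :: "nat \<Rightarrow> nat \<Rightarrow> (nat \<Rightarrow> int) \<Rightarrow> ('b \<Rightarrow> nat \<Rightarrow> int) \<Rightarrow> 'b set \<Rightarrow> bool" where
  "in_span_mod p m v g G \<longleftrightarrow>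
     (\<exists>c :: 'b \<Rightarrow> int. \<forall>j<m. [v j = (\<Sum>h\<in>G. c h * g h j)] (mod int p))"

end

theory Submission
  imports Defs
begin

text \<open>If I is contained in A_j, the j-th coordinate of the sum of the forms L_H over
  I <= H <= X with card H = card I + t is the binomial coefficient (y_j choose t), where
  y_j = card (A_j \<inter> X) - card I.  As card (A_j \<inter> X) is card A_j or card A_j - 1 and
  card A_j mod p lies in K, every y_j is a root modulo p of the degree 2r polynomial
  P(y) = prod over k in K of (y - k + card I) (y - k + card I + 1).  Written in the binomial
  basis, P has leading term (2r)! (y choose 2r); for 2r < p this coefficient is invertible
  mod p, so (y_j choose 2r) is one fixed combination of the (y_j choose t), t < 2r, for all j
  simultaneously, which is the claimed relation among the forms.  The bound on i leaves only
  p = 2, r = s = 1, i = 0 with 2r >= p, and there the parity conditions alone make the forms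
  L_H with card H < 2 span every linear form.\<close>

definition in_choose_span :: "nat \<Rightarrow> (nat \<Rightarrow> int) \<Rightarrow> bool" where
  "in_choose_span k f \<longleftrightarrow> (\<exists>c. \<forall>y. f y = (\<Sum>t<k. c t * int (y choose t)))"

lemma in_choose_span_zero: "in_choose_span k (\<lambda>y. 0)"
  unfolding in_choose_span_def by (rule exI[of _ "\<lambda>_. 0"]) simp

lemma in_choose_span_add:
  assumes "in_choose_span k f" "in_choose_span k g"
  shows "in_choose_span k (\<lambda>y. f y + g y)"
proof -
  obtain c d where "\<And>y. f y = (\<Sum>t<k. c t * int (y choose t))" "\<And>y. g y = (\<Sum>t<k. d t * int (y choose t))"
    using assms unfolding in_choose_span_def by blast
  then have "f y + g y = (\<Sum>t<k. (c t + d t) * int (y choose t))" for y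
    by (simp add: distrib_right sum.distrib)
  then show ?thesis unfolding in_choose_span_def by (intro exI[of _ "\<lambda>t. c t + d t"]) blast
qed

lemma in_choose_span_smult:
  assumes "in_choose_span k f"
  shows "in_choose_span k (\<lambda>y. a * f y)"
proof -
  obtain c where "\<And>y. f y = (\<Sum>t<k. c t * int (y choose t))"
    using assms unfolding in_choose_span_def by blast
  then have "a * f y = (\<Sum>t<k. (a * c t) * int (y choose t))" for y
    by (simp add: sum_distrib_left mult.assoc)
  then show ?thesis unfolding in_choose_span_def by (intro exI[of _ "\<lambda>t. a * c t"]) blast
qed

lemma in_choose_span_sum:
  assumes "\<And>x. x \<in> S \<Longrightarrow> in_choose_span k (g x)"
  shows "in_choose_span k (\<lambda>y. \<Sum>x\<in>S. g x y)"
  using assms by (induction S rule: infinite_finite_induct)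
    (auto intro: in_choose_span_add in_choose_span_zero)

lemma in_choose_span_choose:
  assumes "t < k"
  shows "in_choose_span k (\<lambda>y. int (y choose t))"
proof -
  have "int (y choose t) = (\<Sum>s<k. of_bool (s = t) * int (y choose s))" for y
  proof -
    have "(\<Sum>s<k. of_bool (s = t) * int (y choose s)) = (\<Sum>s<k. if s = t then int (y choose s) else 0)"
      by (rule sum.cong) auto
    then show ?thesis using assms by simp
  qed
  then show ?thesis unfolding in_choose_span_def by (intro exI[of _ "\<lambda>s. of_bool (s = t)"]) blast
qed

lemma linear_times_choose:
  "(int y - u) * int (y choose t) = int (Suc t) * int (y choose Suc t) + (int t - u) * int (y choose t)"
proof -
  have "Suc t * (y choose Suc t) = (y - t) * (y choose t)"
    by (metis binomial_absorb_comp binomial_absorption)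
  moreover have "(y - t) * (y choose t) + t * (y choose t) = y * (y choose t)"
    by (cases "t \<le> y") (auto simp: algebra_simps diff_mult_distrib)
  ultimately have "Suc t * (y choose Suc t) + t * (y choose t) = y * (y choose t)"
    by simp
  then have "int (Suc t) * int (y choose Suc t) + int t * int (y choose t) = int y * int (y choose t)"
    by (metis of_nat_add of_nat_mult)
  then show ?thesis by (simp add: algebra_simps)
qed

lemma in_choose_span_linear_times:
  assumes "in_choose_span k f"
  shows "in_choose_span (Suc k) (\<lambda>y. (int y - u) * f y)"
proof -
  obtain c where c: "\<And>y. f y = (\<Sum>t<k. c t * int (y choose t))"
    using assms unfolding in_choose_span_def by blast
  have "in_choose_span (Suc k) (\<lambda>y. c t * ((int y - u) * int (y choose t)))" if "t < k" for t
    unfolding linear_times_choose using that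
    by (intro in_choose_span_smult in_choose_span_add in_choose_span_choose) auto
  then have "in_choose_span (Suc k) (\<lambda>y. \<Sum>t<k. c t * ((int y - u) * int (y choose t)))"
    by (intro in_choose_span_sum) auto
  moreover have "(int y - u) * f y = (\<Sum>t<k. c t * ((int y - u) * int (y choose t)))" for y
    by (simp add: c sum_distrib_left algebra_simps)
  ultimately show ?thesis by simp
qed

lemma prod_linear_eq_fact_choose_plus_lower:
  fixes a :: "'a \<Rightarrow> int"
  assumes "finite S"
  shows "\<exists>g. in_choose_span (card S) g \<and>
    (\<forall>y. (\<Prod>x\<in>S. int y - a x) = fact (card S) * int (y choose card S) + g y)"
  using assms
proof (induction S rule: finite_induct)
  case empty
  show ?case by (auto intro: in_choose_span_zero)
next
  case (insert x S)
  define s where "s = card S"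
  obtain g where g: "in_choose_span s g"
    and prod_S: "\<And>y. (\<Prod>x\<in>S. int y - a x) = fact s * int (y choose s) + g y"
    using insert.IH unfolding s_def by blast
  define g' where "g' y = fact s * (int s - a x) * int (y choose s) + (int y - a x) * g y" for y
  have "in_choose_span (Suc s) g'"
    unfolding g'_def
    by (intro in_choose_span_add in_choose_span_smult in_choose_span_choose
        in_choose_span_linear_times g) auto
  moreover have "(\<Prod>x\<in>insert x S. int y - a x) = fact (Suc s) * int (y choose Suc s) + g' y" for y
  proof -
    have "(\<Prod>x\<in>insert x S. int y - a x) = fact s * ((int y - a x) * int (y choose s)) + (int y - a x) * g y"
      using insert.hyps by (simp add: prod_S algebra_simps)
    also have "\<dots> = fact (Suc s) * int (y choose Suc s) + g' y"
      unfolding linear_times_choose g'_def by (simp add: algebra_simps)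
    finally show ?thesis .
  qed
  ultimately show ?case using insert.hyps unfolding s_def by auto
qed

lemma choose_cong_of_prod_linear_cong_0:
  fixes p :: nat and a :: "'a \<Rightarrow> int"
  assumes p: "prime p" and S: "finite S" "card S < p"
  obtains e where "\<And>y. [(\<Prod>x\<in>S. int y - a x) = 0] (mod int p) \<Longrightarrow>
    [int (y choose card S) = (\<Sum>t<card S. e t * int (y choose t))] (mod int p)"
proof -
  define s where "s = card S"
  obtain g where g: "in_choose_span s g"
    and prod_S: "\<And>y. (\<Prod>x\<in>S. int y - a x) = fact s * int (y choose s) + g y"
    using prod_linear_eq_fact_choose_plus_lower[OF S(1), of a] unfolding s_def by blast
  obtain c where c: "\<And>y. g y = (\<Sum>t<s. c t * int (y choose t))"
    using g unfolding in_choose_span_def by blast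
  have "\<not> p dvd fact s"
    using p S(2) by (simp add: prime_dvd_fact_iff s_def)
  then have "coprime (fact s :: int) (int p)"
    using p by (metis coprime_commute coprime_int_iff of_nat_fact prime_imp_coprime)
  then obtain w where w: "[fact s * w = 1] (mod int p)"
    using cong_solve_coprime_int by blast
  have "[int (y choose s) = (\<Sum>t<s. - w * c t * int (y choose t))] (mod int p)"
    if "[(\<Prod>x\<in>S. int y - a x) = 0] (mod int p)" for y
  proof -
    have "[int (y choose s) = fact s * w * int (y choose s)] (mod int p)"
      using cong_scalar_right[OF w, of "int (y choose s)"] by (simp add: cong_sym)
    also have "fact s * w * int (y choose s) = w * (\<Prod>x\<in>S. int y - a x) - w * g y"
      unfolding prod_S by (simp add: algebra_simps)
    also have "[\<dots> = w * 0 - w * g y] (mod int p)"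
      using cong_diff[OF cong_mult[OF cong_refl that] cong_refl] by simp
    also have "w * 0 - w * g y = - (\<Sum>t<s. w * c t * int (y choose t))"
      by (simp add: c sum_distrib_left mult.assoc)
    also have "\<dots> = (\<Sum>t<s. - w * c t * int (y choose t))"
      by (simp only: sum_negf[symmetric] mult_minus_left)
    finally show ?thesis .
  qed
  then show ?thesis unfolding s_def by (rule that)
qed

lemma card_supersets_eq_choose:
  assumes "finite B" "I \<subseteq> B"
  shows "card {H. H \<subseteq> B \<and> card H = card I + t \<and> I \<subseteq> H} = (card B - card I) choose t"
proof -
  have fin_I: "finite I" using assms finite_subset by blast
  have "bij_betw (\<lambda>J. J \<union> I) {J. J \<subseteq> B - I \<and> card J = t} {H. H \<subseteq> B \<and> card H = card I + t \<and> I \<subseteq> H}"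
  proof (rule bij_betw_byWitness[where f' = "\<lambda>H. H - I"])
    show "(\<lambda>J. J \<union> I) ` {J. J \<subseteq> B - I \<and> card J = t} \<subseteq> {H. H \<subseteq> B \<and> card H = card I + t \<and> I \<subseteq> H}"
    proof safe
      fix J assume "J \<subseteq> B - I"
      moreover have "finite J" using \<open>J \<subseteq> B - I\<close> assms(1) finite_subset by blast
      ultimately show "card (J \<union> I) = card I + card J"
        using fin_I by (subst card_Un_disjoint) auto
    qed (use assms in auto)
    show "(\<lambda>H. H - I) ` {H. H \<subseteq> B \<and> card H = card I + t \<and> I \<subseteq> H} \<subseteq> {J. J \<subseteq> B - I \<and> card J = t}"
      using fin_I by (auto simp: card_Diff_subset)
  qed auto
  then have "card {H. H \<subseteq> B \<and> card H = card I + t \<and> I \<subseteq> H} = card {J. J \<subseteq> B - I \<and> card J = t}"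
    by (simp add: bij_betw_same_card)
  also have "\<dots> = (card B - card I) choose t"
    using assms fin_I by (simp add: n_subsets card_Diff_subset)
  finally show ?thesis .
qed

lemma sum_lin_form_supersets:
  assumes "j < m" "finite X"
  shows "(\<Sum>H\<in>{H. H \<subseteq> X \<and> card H = card I + t \<and> I \<subseteq> H}. lin_form A m H j)
    = (if I \<subseteq> A j \<inter> X then int ((card (A j \<inter> X) - card I) choose t) else 0)"
proof -
  have fin: "finite {H. H \<subseteq> X \<and> card H = card I + t \<and> I \<subseteq> H}"
    using assms(2) by simp
  have "{H \<in> {H. H \<subseteq> X \<and> card H = card I + t \<and> I \<subseteq> H}. H \<subseteq> A j}
      = {H. H \<subseteq> A j \<inter> X \<and> card H = card I + t \<and> I \<subseteq> H}"
    by auto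
  then have "(\<Sum>H\<in>{H. H \<subseteq> X \<and> card H = card I + t \<and> I \<subseteq> H}. lin_form A m H j)
      = int (card {H. H \<subseteq> A j \<inter> X \<and> card H = card I + t \<and> I \<subseteq> H})"
    using assms(1) fin by (simp add: lin_form_def sum.If_cases Int_def)
  then show ?thesis
    using assms(2) card_supersets_eq_choose[of "A j \<inter> X" I t] by auto
qed

lemma in_span_mod_supersets_of_choose_cong:
  assumes fin_X: "finite X"
    and choose_cong: "\<And>j. j < m \<Longrightarrow> I \<subseteq> A j \<inter> X \<Longrightarrow>
      [int ((card (A j \<inter> X) - card I) choose d)
        = (\<Sum>t<d. e t * int ((card (A j \<inter> X) - card I) choose t))] (mod int p)"
  shows "in_span_mod p m
    (\<lambda>j. \<Sum>H\<in>{H. H \<subseteq> X \<and> card H = card I + d \<and> I \<subseteq> H}. lin_form A m H j)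
    (lin_form A m)
    {H. H \<subseteq> X \<and> card I \<le> card H \<and> card H < card I + d}"
proof -
  define level where "level t = {H. H \<subseteq> X \<and> card H = card I + t \<and> I \<subseteq> H}" for t
  define G where "G = {H. H \<subseteq> X \<and> card I \<le> card H \<and> card H < card I + d}"
  define coef where "coef H = (if I \<subseteq> H then e (card H - card I) else 0)" for H
  have regroup: "(\<Sum>H\<in>G. coef H * lin_form A m H j) = (\<Sum>t<d. e t * (\<Sum>H\<in>level t. lin_form A m H j))" for j
  proof -
    have fin_G: "finite G" unfolding G_def using fin_X by simp
    have "(\<Sum>H\<in>G. coef H * lin_form A m H j)
        = (\<Sum>H\<in>G. if I \<subseteq> H then e (card H - card I) * lin_form A m H j else 0)"
      by (rule sum.cong) (simp_all add: coef_def)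
    also have "\<dots> = (\<Sum>H\<in>{H \<in> G. I \<subseteq> H}. e (card H - card I) * lin_form A m H j)"
      using fin_G by (simp add: sum.inter_filter)
    also have "\<dots> = (\<Sum>t<d. \<Sum>H\<in>{H \<in> {H \<in> G. I \<subseteq> H}. card H - card I = t}. e (card H - card I) * lin_form A m H j)"
      using fin_G by (intro sum.group[symmetric] finite_subset[OF _ fin_G]) (auto simp: G_def)
    also have "\<dots> = (\<Sum>t<d. e t * (\<Sum>H\<in>level t. lin_form A m H j))"
    proof (rule sum.cong[OF refl])
      fix t assume "t \<in> {..<d}"
      then have "{H \<in> {H \<in> G. I \<subseteq> H}. card H - card I = t} = level t"
        unfolding G_def level_def by auto
      then show "(\<Sum>H\<in>{H \<in> {H \<in> G. I \<subseteq> H}. card H - card I = t}. e (card H - card I) * lin_form A m H j)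
          = e t * (\<Sum>H\<in>level t. lin_form A m H j)"
        by (simp add: sum_distrib_left level_def)
    qed
    finally show ?thesis .
  qed
  have "[(\<Sum>H\<in>level d. lin_form A m H j) = (\<Sum>H\<in>G. coef H * lin_form A m H j)] (mod int p)"
    if "j < m" for j
  proof (cases "I \<subseteq> A j \<inter> X")
    case True
    then show ?thesis
      using choose_cong[OF that] fin_X that by (simp add: regroup level_def sum_lin_form_supersets)
  next
    case False
    then have "(\<Sum>H\<in>level t. lin_form A m H j) = 0" for t
      unfolding level_def using fin_X that by (subst sum_lin_form_supersets) auto
    then show ?thesis by (simp add: regroup)
  qed
  then show ?thesis
    unfolding in_span_mod_def level_def G_def by blast
qed

lemma sum_eq_sum_Int_plus_of_bool:
  fixes f :: "'a \<Rightarrow> 'b :: comm_semiring_1"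
  assumes "finite A" "A \<subseteq> insert n X" "n \<notin> X"
  shows "sum f A = sum f (A \<inter> X) + of_bool (n \<in> A) * f n"
proof (cases "n \<in> A")
  case True
  then have A_eq: "insert n (A \<inter> X) = A" using assms(2) by blast
  have "sum f (insert n (A \<inter> X)) = f n + sum f (A \<inter> X)"
    using assms(1,3) by (intro sum.insert) auto
  then show ?thesis using True unfolding A_eq by (simp add: add.commute)
next
  case False
  then have "A = A \<inter> X" using assms(2) by blast
  then show ?thesis using False by simp
qed

lemma card_eq_card_Int_plus_of_bool:
  assumes "finite A" "A \<subseteq> insert n X" "n \<notin> X"
  shows "card A = card (A \<inter> X) + of_bool (n \<in> A)"
  using sum_eq_sum_Int_plus_of_bool[OF assms, of "\<lambda>_. 1 :: nat"] by simp

lemma in_span_mod_supersets_of_card_residues: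
  fixes p :: nat and K :: "nat set" and A :: "nat \<Rightarrow> nat set"
  assumes p: "prime p" and fin_K: "finite K" and small: "2 * card K < p"
    and fin_X: "finite X" and n_X: "n \<notin> X"
    and A_sub: "\<And>j. j < m \<Longrightarrow> A j \<subseteq> insert n X"
    and A_K: "\<And>j. j < m \<Longrightarrow> card (A j) mod p \<in> K"
  shows "in_span_mod p m
    (\<lambda>j. \<Sum>H\<in>{H. H \<subseteq> X \<and> card H = card I + 2 * card K \<and> I \<subseteq> H}. lin_form A m H j)
    (lin_form A m)
    {H. H \<subseteq> X \<and> card I \<le> card H \<and> card H < card I + 2 * card K}"
proof -
  define S where "S = K \<times> {0::nat, 1}"
  define a where "a = (\<lambda>(k, b). int k - int (card I) - int b)"
  have card_S: "card S = 2 * card K"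
    unfolding S_def by (simp add: card_cartesian_product)
  obtain e where e: "\<And>y. [(\<Prod>x\<in>S. int y - a x) = 0] (mod int p) \<Longrightarrow>
      [int (y choose card S) = (\<Sum>t<card S. e t * int (y choose t))] (mod int p)"
    using choose_cong_of_prod_linear_cong_0[OF p, of S] fin_K small
    unfolding S_def card_S[unfolded S_def] by auto
  show ?thesis
    unfolding card_S[symmetric]
  proof (rule in_span_mod_supersets_of_choose_cong[OF fin_X e])
    fix j assume j: "j < m" and I_sub: "I \<subseteq> A j \<inter> X"
    define y where "y = card (A j \<inter> X) - card I"
    define x where "x = (card (A j) mod p, of_bool (n \<in> A j) :: nat)"
    have fin_A: "finite (A j)" using A_sub[OF j] fin_X finite_subset by blast
    have "card I \<le> card (A j \<inter> X)" using I_sub fin_A by (simp add: card_mono)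
    then have "int y - a x = int (card (A j)) - int (card (A j) mod p)"
      unfolding a_def x_def y_def
      using card_eq_card_Int_plus_of_bool[OF fin_A A_sub[OF j] n_X] by simp
    also have "[\<dots> = 0] (mod int p)"
      by (simp add: cong_diff_iff_cong_0 of_nat_mod)
    finally have "int p dvd int y - a x" by (simp add: cong_0_iff)
    moreover have "int y - a x dvd (\<Prod>x\<in>S. int y - a x)"
      using A_K[OF j] fin_K unfolding S_def x_def by (intro dvd_prodI) auto
    ultimately have "int p dvd (\<Prod>x\<in>S. int y - a x)"
      by (rule dvd_trans)
    then show "[(\<Prod>x\<in>S. int (card (A j \<inter> X) - card I) - a x) = 0] (mod int p)"
      by (simp add: cong_0_iff y_def)
  qed
qed

lemma even_weighted_card_Int_sum:
  fixes v :: "nat \<Rightarrow> int" and k :: nat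
  assumes j: "j < m" and k: "k < 2"
    and parity: "\<And>l. l < m \<Longrightarrow> card (A j \<inter> A l) mod 2 = (if l = j then k else 1 - k)"
  shows "even ((\<Sum>l<m. v l * int (card (A j \<inter> A l))) - ((1 - int k) * sum v {..<m} + v j))"
proof -
  define r where "r l = int (if l = j then k else 1 - k)" for l
  have even_terms: "even (\<Sum>l<m. v l * (int (card (A j \<inter> A l)) - r l))"
  proof (rule dvd_sum)
    fix l assume "l \<in> {..<m}"
    then have "r l = int (card (A j \<inter> A l) mod 2)"
      unfolding r_def using parity by simp
    then have "even (int (card (A j \<inter> A l)) - r l)"
      by presburger
    then show "even (v l * (int (card (A j \<inter> A l)) - r l))" by simp
  qed
  have "(\<Sum>l<m. v l * r l) = (\<Sum>l<m. (1 - int k) * v l + (if l = j then (2 * int k - 1) * v l else 0))"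
    using k by (intro sum.cong) (auto simp: r_def algebra_simps)
  also have "\<dots> = (1 - int k) * sum v {..<m} + (2 * int k - 1) * v j"
    using j by (simp add: sum.distrib sum_distrib_left)
  finally have "(\<Sum>l<m. v l * int (card (A j \<inter> A l))) - ((1 - int k) * sum v {..<m} + v j)
      = (\<Sum>l<m. v l * (int (card (A j \<inter> A l)) - r l)) + 2 * ((int k - 1) * v j)"
    by (simp add: sum_subtractf right_diff_distrib algebra_simps)
  then show ?thesis using even_terms by simp
qed

lemma sum_empty_and_singletons_lin_form:
  assumes "j < m" "finite X"
  shows "(\<Sum>H\<in>{H. H \<subseteq> X \<and> card H < 2}. (if H = {} then c else f (the_elem H)) * lin_form A m H j)
    = c + (\<Sum>h\<in>A j \<inter> X. f h)"
proof -
  have G_eq: "{H. H \<subseteq> X \<and> card H < 2} = insert {} ((\<lambda>h. {h}) ` X)"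
  proof (intro set_eqI iffI)
    fix H assume "H \<in> {H. H \<subseteq> X \<and> card H < 2}"
    moreover then have "finite H" using assms(2) finite_subset by blast
    ultimately show "H \<in> insert {} ((\<lambda>h. {h}) ` X)"
      by (auto simp: less_2_cases_iff card_1_singleton_iff)
  qed auto
  have "(\<Sum>H\<in>insert {} ((\<lambda>h. {h}) ` X). (if H = {} then c else f (the_elem H)) * lin_form A m H j)
      = c * lin_form A m {} j + (\<Sum>h\<in>X. f h * lin_form A m {h} j)"
    using assms(2) by (subst sum.insert) (auto simp: sum.reindex)
  also have "\<dots> = c + (\<Sum>h\<in>X. if h \<in> A j then f h else 0)"
    using assms(1) by (simp add: lin_form_def if_distrib cong: if_cong)
  also have "\<dots> = c + (\<Sum>h\<in>A j \<inter> X. f h)"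
    using assms(2) by (simp add: sum.inter_filter[symmetric] Int_def conj_commute)
  finally show ?thesis unfolding G_eq .
qed

lemma in_span_mod_two_empty_and_singletons:
  fixes v :: "nat \<Rightarrow> int" and k :: nat
  assumes k: "k < 2" and fin_X: "finite X" and n_X: "n \<notin> X"
    and A_sub: "\<And>j. j < m \<Longrightarrow> A j \<subseteq> insert n X"
    and parity: "\<And>j l. j < m \<Longrightarrow> l < m \<Longrightarrow> card (A j \<inter> A l) mod 2 = (if l = j then k else 1 - k)"
  shows "in_span_mod 2 m v (lin_form A m) {H. H \<subseteq> X \<and> card H < 2}"
proof -
  \<comment> \<open>Modulo 2 the sum of d over A_j is (1 - k) * sum v + v j, and the coefficients
    of L_{} and L_{h} are chosen to read off v j from it.\<close>
  define d where "d h = (\<Sum>l<m. v l * of_bool (h \<in> A l))" for h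
  define c0 where "c0 = (1 - int k) * sum v {..<m} + int k * d n"
  have "[v j = (\<Sum>H\<in>{H. H \<subseteq> X \<and> card H < 2}.
      (if H = {} then c0 else d (the_elem H) + d n) * lin_form A m H j)] (mod int 2)"
    if j: "j < m" for j
  proof -
    have fin_A: "finite (A j)" using A_sub[OF j] fin_X finite_subset by blast
    define \<alpha> where "\<alpha> = card (A j \<inter> X)"
    have coord: "(\<Sum>H\<in>{H. H \<subseteq> X \<and> card H < 2}.
        (if H = {} then c0 else d (the_elem H) + d n) * lin_form A m H j)
        = c0 + (\<Sum>h\<in>A j \<inter> X. d h) + int \<alpha> * d n"
      using sum_empty_and_singletons_lin_form[OF j fin_X, where c = c0 and f = "\<lambda>h. d h + d n" and A = A]
      by (simp add: sum.distrib \<alpha>_def)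
    have "(\<Sum>h\<in>A j. d h) = (\<Sum>l<m. v l * int (card (A j \<inter> A l)))"
      unfolding d_def using fin_A by (subst sum.swap) (simp add: Int_def mult.commute)
    then have even_A: "even ((\<Sum>h\<in>A j. d h) - ((1 - int k) * sum v {..<m} + v j))"
      using even_weighted_card_Int_sum[OF j k parity[OF j]] by simp
    have sum_A: "(\<Sum>h\<in>A j. d h) = (\<Sum>h\<in>A j \<inter> X. d h) + of_bool (n \<in> A j) * d n"
      by (rule sum_eq_sum_Int_plus_of_bool[OF fin_A A_sub[OF j] n_X])
    have card_A: "card (A j) = \<alpha> + of_bool (n \<in> A j)"
      unfolding \<alpha>_def by (rule card_eq_card_Int_plus_of_bool[OF fin_A A_sub[OF j] n_X])
    have "card (A j) mod 2 = k"
      using parity[OF j j] by simp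
    then have even_k: "even (int k - int (card (A j)))"
      by presburger
    have "c0 + (\<Sum>h\<in>A j \<inter> X. d h) + int \<alpha> * d n - v j
        = ((\<Sum>h\<in>A j. d h) - ((1 - int k) * sum v {..<m} + v j))
          + (int k - int (card (A j))) * d n + 2 * ((1 - int k) * sum v {..<m} + int \<alpha> * d n)"
      unfolding c0_def sum_A card_A by (simp add: algebra_simps)
    moreover have "even (((\<Sum>h\<in>A j. d h) - ((1 - int k) * sum v {..<m} + v j))
          + (int k - int (card (A j))) * d n + 2 * ((1 - int k) * sum v {..<m} + int \<alpha> * d n))"
      by (intro dvd_add even_A dvd_mult2 even_k dvd_triv_left)
    ultimately have "even (c0 + (\<Sum>h\<in>A j \<inter> X. d h) + int \<alpha> * d n - v j)"
      by (simp only:)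
    then show ?thesis
      unfolding coord by (simp add: cong_iff_dvd_diff dvd_diff_commute)
  qed
  then show ?thesis
    unfolding in_span_mod_def by (intro exI[of _ "\<lambda>H. if H = {} then c0 else d (the_elem H) + d n"]) blast
qed

lemma in_span_mod_two_of_disjoint_singleton_residues:
  fixes K L :: "nat set" and v :: "nat \<Rightarrow> int"
  assumes K_L: "K \<subseteq> {0..<2}" "L \<subseteq> {0..<2}" "K \<inter> L = {}" "card K = 1" "card L = 1"
    and fin_X: "finite X" and n_X: "n \<notin> X"
    and A_sub: "\<And>j. j < m \<Longrightarrow> A j \<subseteq> insert n X"
    and A_K: "\<And>j. j < m \<Longrightarrow> card (A j) mod 2 \<in> K"
    and A_L: "\<And>j l. j < m \<Longrightarrow> l < m \<Longrightarrow> j \<noteq> l \<Longrightarrow> card (A j \<inter> A l) mod 2 \<in> L"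
  shows "in_span_mod 2 m v (lin_form A m) {H. H \<subseteq> X \<and> card H < 2}"
proof -
  obtain k l where K: "K = {k}" and L: "L = {l}"
    using K_L(4,5) by (meson card_1_singletonE)
  have "k < 2" "l = 1 - k"
    using K_L(1-3) unfolding K L by auto
  have "card (A j \<inter> A l') mod 2 = (if l' = j then k else 1 - k)" if "j < m" "l' < m" for j l'
    using A_K[OF that(1)] A_L[OF that] \<open>l = 1 - k\<close> unfolding K L by (cases "l' = j") simp_all
  from in_span_mod_two_empty_and_singletons[OF \<open>k < 2\<close> fin_X n_X A_sub this]
  show ?thesis .
qed

lemma card_add_card_le_of_disjoint:
  assumes "finite U" "K \<subseteq> U" "L \<subseteq> U" "K \<inter> L = {}"
  shows "card K + card L \<le> card U"
proof -
  have "card K + card L = card (K \<union> L)"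
    using assms by (simp add: card_Un_disjoint finite_subset)
  also have "\<dots> \<le> card U"
    using assms by (simp add: card_mono)
  finally show ?thesis .
qed

theorem mainTheorem4:
  fixes p n m :: nat and K L :: "nat set" and A :: "nat \<Rightarrow> nat set"
  assumes "prime p"
    and "K \<subseteq> {0..<p}" and "L \<subseteq> {0..<p}" and "K \<inter> L = {}"
    and "\<And>i. i < m \<Longrightarrow> A i \<subseteq> {1..n}"
    and "inj_on A {0..<m}"
    and "\<And>i. i < m \<Longrightarrow> card (A i) mod p \<in> K"
    and "\<And>i j. i < m \<Longrightarrow> j < m \<Longrightarrow> i \<noteq> j \<Longrightarrow> card (A i \<inter> A j) mod p \<in> L"
    and "int i \<le> int (card L) - 2 * int (card K) + 1"
    and "I \<subseteq> {1..n-1}" and "card I = i"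
  shows "in_span_mod p m
           (\<lambda>j. \<Sum>H\<in>{H. H \<subseteq> {1..n-1} \<and> card H = i + 2 * card K \<and> I \<subseteq> H}. lin_form A m H j)
           (lin_form A m)
           {H. H \<subseteq> {1..n-1} \<and> i \<le> card H \<and> card H < i + 2 * card K}"
proof -
  have fin_X: "finite {1..n-1}" and n_X: "n \<notin> {1..n-1}" by auto
  have A_sub: "A j \<subseteq> insert n {1..n-1}" if "j < m" for j
    using assms(5)[OF that] by auto
  have fin_K: "finite K" using assms(2) finite_subset by blast
  show ?thesis
  proof (cases "2 * card K < p")
    case True
    from in_span_mod_supersets_of_card_residues[OF assms(1) fin_K True fin_X n_X A_sub assms(7), where I = I]
    show ?thesis unfolding assms(11) .
  next
    case False
    \<comment> \<open>(2 card K)! is not invertible mod p; the bound on i forces the degenerate case.\<close>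
    with card_add_card_le_of_disjoint[OF _ assms(2-4)] assms(9) prime_ge_2_nat[OF assms(1)]
    have "p = 2" "card K = 1" "card L = 1" "i = 0"
      by simp_all
    then have "{H. H \<subseteq> {1..n-1} \<and> i \<le> card H \<and> card H < i + 2 * card K}
        = {H. H \<subseteq> {1..n-1} \<and> card H < 2}"
      by (simp add: numeral_2_eq_2)
    with \<open>p = 2\<close> \<open>card K = 1\<close> \<open>card L = 1\<close> show ?thesis
      using in_span_mod_two_of_disjoint_singleton_residues[OF assms(2-4)[unfolded \<open>p = 2\<close>]
          _ _ fin_X n_X A_sub assms(7,8)[unfolded \<open>p = 2\<close>]]
      by simp
  qed
qed

end
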